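(* Let $q\equiv1\pmod{12}$, and suppose $-1/2$ is a cube and $-1/3$ is a fourth power in $\mathbb{F}_q$. Then $-1/3$ is a square in $\mathbb{F}_q$, and the line $L_c$ through $\mathbf{P}(1,0,0,1)$ and $\mathbf{P}(0,0,1,0)$ and the line $\ell_{-1/3}$ through $\mathbf{P}(0,-1/3,0,1)$ and $\mathbf{P}(1,0,1,0)$ belong to the same orbit of $G_q$.
   Context: Points of $\mathrm{PG}(3,q)$ are written $\mathbf{P}(x_0,x_1,x_2,x_3)$ over $\mathbb{F}_q$. The twisted cubic is $\mathscr{C}=\{\mathbf{P}(t^3,t^2,t,1):t\in\mathbb{F}_q\}\cup\{\mathbf{P}(1,0,0,0)\}$ and $G_q$ is the group of projectivities of $\mathrm{PG}(3,q)$ fixing $\mathscr{C}$. Two lines are in the same orbit if an element of $G_q$ maps one onto the other. *)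

theory Defs
  imports "HOL-Analysis.Cartesian_Space"
begin

text \<open>Homogeneous coordinates: a point P(x0,x1,x2,x3) of PG(3,q) is represented by the
  1-dimensional subspace of F_q^4 spanned by the nonzero vector (x0,x1,x2,x3);
  a line is represented by the 2-dimensional subspace of F_q^4 it spans.\<close>

definition vec4 :: "'a::field \<Rightarrow> 'a \<Rightarrow> 'a \<Rightarrow> 'a \<Rightarrow> 'a^4" where
  "vec4 a b c d = vector [a, b, c, d]"

definition twisted_cubic_cone :: "((('a::field)^4) set)" where
  "twisted_cubic_cone =
     {c *s vec4 (t^3) (t^2) t 1 | c t. c \<noteq> 0} \<union> {c *s vec4 1 0 0 0 | c. c \<noteq> 0}"

text \<open>Matrices inducing the projectivities of PG(3,q) that fix the twisted cubic
  (the group G_q; proportional matrices induce the same projectivity).\<close>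
definition Gq_matrices :: "(('a::field)^4^4) set" where
  "Gq_matrices = {A. invertible A \<and> (\<lambda>x. A *v x) ` twisted_cubic_cone = twisted_cubic_cone}"

text \<open>The line through P(u) and P(w) (u, w linearly independent), as a 2-dim subspace.\<close>
definition proj_line :: "('a::field)^4 \<Rightarrow> 'a^4 \<Rightarrow> ('a^4) set" where
  "proj_line u w = {a *s u + b *s w | a b. True}"

definition same_Gq_orbit :: "(('a::field)^4) set \<Rightarrow> ('a^4) set \<Rightarrow> bool" where
  "same_Gq_orbit L M \<longleftrightarrow> (\<exists>A \<in> Gq_matrices. (\<lambda>x. A *v x) ` L = M)"

end

theory Submission
  imports Defs "HOL-Computational_Algebra.Polynomial"
begin

(* A matrix [[a, b], [c, d]] with a d - b c \<noteq> 0 acts on binary cubic forms; the induced 4x4 matrix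
  fixes the twisted cubic, moving the point of parameter t to that of (a t + b) / (c t + d).
  Hence it suffices to find such a matrix sending P(1,0,0,1) and P(0,0,1,0) into the line
  l_{-1/3}: being invertible, it then maps L_c onto l_{-1/3}. One works with
  (a, b, c, d) = (2 R x (1 + R^2), R (R^2 - 1), -4 R^2 x, R^2 - 1), where x^3 = -1/2 and
  3 R^4 + 6 R^2 - 1 = 0; the incidences are polynomial identities modulo these two relations.
  The root R exists because q = 1 (mod 4) makes -1 a square, which together with a fourth root
  of -1/3 produces sqrt 3 and sqrt (2 sqrt 3). *)

lemma vec4_nth [simp]:
  "vec4 a b c d $ 1 = a" "vec4 a b c d $ 2 = b" "vec4 a b c d $ 3 = c" "vec4 a b c d $ 4 = d"
  by (simp_all add: vec4_def vector_def)

lemma vec4_eq_iff: "v = vec4 a b c d \<longleftrightarrow> v$1 = a \<and> v$2 = b \<and> v$3 = c \<and> v$4 = d"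
  by (auto simp: vec_eq_iff forall_4)

lemma vec4_inject [simp]: "vec4 a b c d = vec4 a' b' c' d' \<longleftrightarrow> a = a' \<and> b = b' \<and> c = c' \<and> d = d'"
  by (simp add: vec4_eq_iff)

lemma vec4_components: "v = vec4 (v$1) (v$2) (v$3) (v$4)"
  by (simp add: vec4_eq_iff)

lemma scalar_mult_vec4 [simp]: "k *s vec4 a b c d = vec4 (k*a) (k*b) (k*c) (k*d)"
  by (simp add: vec4_eq_iff)

lemma add_vec4 [simp]: "vec4 a b c d + vec4 a' b' c' d' = vec4 (a+a') (b+b') (c+c') (d+d')"
  by (simp add: vec4_eq_iff)

lemma zero_eq_vec4: "0 = vec4 0 0 0 0"
  by (simp add: vec4_eq_iff)

definition cubic_point :: "'a::field \<Rightarrow> 'a \<Rightarrow> 'a^4" where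
  "cubic_point u w = vec4 (u^3) (u^2*w) (u*w^2) (w^3)"

lemma twisted_cubic_cone_eq:
  "twisted_cubic_cone = {k *s cubic_point u w | k u w. k \<noteq> 0 \<and> (u \<noteq> 0 \<or> w \<noteq> 0)}"
proof (intro equalityI subsetI)
  fix v :: "'a^4"
  assume "v \<in> twisted_cubic_cone"
  then consider k t where "k \<noteq> 0" "v = k *s cubic_point t 1"
    | k where "k \<noteq> 0" "v = k *s cubic_point 1 0"
    unfolding twisted_cubic_cone_def cubic_point_def by fastforce
  then show "v \<in> {k *s cubic_point u w | k u w. k \<noteq> 0 \<and> (u \<noteq> 0 \<or> w \<noteq> 0)}"
    by cases fastforce+
next
  fix v :: "'a^4"
  assume "v \<in> {k *s cubic_point u w | k u w. k \<noteq> 0 \<and> (u \<noteq> 0 \<or> w \<noteq> 0)}"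
  then obtain k u w where k: "k \<noteq> 0" and uw: "u \<noteq> 0 \<or> w \<noteq> 0" and v: "v = k *s cubic_point u w"
    by blast
  show "v \<in> twisted_cubic_cone"
  proof (cases "w = 0")
    case True
    then have "v = (k*u^3) *s vec4 1 0 0 0"
      by (simp add: v cubic_point_def power2_eq_square)
    moreover have "k*u^3 \<noteq> 0"
      using k uw True by simp
    ultimately show ?thesis
      unfolding twisted_cubic_cone_def by blast
  next
    case False
    then have "v = (k*w^3) *s vec4 ((u/w)^3) ((u/w)^2) (u/w) 1"
      by (simp add: v cubic_point_def power_divide power2_eq_square power3_eq_cube)
    moreover have "k*w^3 \<noteq> 0"
      using k False by simp
    ultimately show ?thesis
      unfolding twisted_cubic_cone_def by blast
  qed
qed

lemma twisted_cubic_cone_scale: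
  assumes "k \<noteq> 0" and "v \<in> twisted_cubic_cone"
  shows "k *s v \<in> twisted_cubic_cone"
proof -
  obtain k' u w where "k' \<noteq> 0" "u \<noteq> 0 \<or> w \<noteq> 0" "v = k' *s cubic_point u w"
    using assms(2) unfolding twisted_cubic_cone_eq by blast
  moreover from this have "k *s v = (k*k') *s cubic_point u w" "k*k' \<noteq> 0"
    using assms(1) by simp_all
  ultimately show ?thesis
    unfolding twisted_cubic_cone_eq by blast
qed

text \<open>Row \<open>i\<close> (from 0) lists the coefficients of \<open>(a u + b w)^(3-i) (c u + d w)^i\<close>
  with respect to \<open>u^3, u^2 w, u w^2, w^3\<close>.\<close>
definition cubic_matrix :: "'a::field \<Rightarrow> 'a \<Rightarrow> 'a \<Rightarrow> 'a \<Rightarrow> 'a^4^4" where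
  "cubic_matrix a b c d = vector [vector [a^3, 3*a^2*b, 3*a*b^2, b^3],
                                 vector [a^2*c, a^2*d + 2*a*b*c, 2*a*b*d + b^2*c, b^2*d],
                                 vector [a*c^2, 2*a*c*d + b*c^2, a*d^2 + 2*b*c*d, b*d^2],
                                 vector [c^3, 3*c^2*d, 3*c*d^2, d^3]]"

lemma cubic_matrix_mult_vec4:
  "cubic_matrix a b c d *v vec4 x0 x1 x2 x3 = vec4
     (a^3*x0 + 3*a^2*b*x1 + 3*a*b^2*x2 + b^3*x3)
     (a^2*c*x0 + (a^2*d + 2*a*b*c)*x1 + (2*a*b*d + b^2*c)*x2 + b^2*d*x3)
     (a*c^2*x0 + (2*a*c*d + b*c^2)*x1 + (a*d^2 + 2*b*c*d)*x2 + b*d^2*x3)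
     (c^3*x0 + 3*c^2*d*x1 + 3*c*d^2*x2 + d^3*x3)"
  by (simp add: vec4_eq_iff cubic_matrix_def matrix_vector_mult_def sum_4 vector_def)

lemma cubic_matrix_mult_cubic_point:
  "cubic_matrix a b c d *v cubic_point u w = cubic_point (a*u + b*w) (c*u + d*w)"
  unfolding cubic_point_def cubic_matrix_mult_vec4 vec4_inject
  by (simp add: algebra_simps power2_eq_square power3_eq_cube)

lemma cubic_matrix_adjugate:
  "cubic_matrix a b c d *v (cubic_matrix d (-b) (-c) a *v v) = (a*d - b*c)^3 *s v"
  by (subst (1 2) vec4_components[of v])
    (simp add: cubic_matrix_mult_vec4 algebra_simps power2_eq_square power3_eq_cube)

lemma cubic_matrix_right_inverse:
  assumes "a*d - b*c \<noteq> 0"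
  shows "cubic_matrix a b c d *v ((1 / (a*d - b*c)^3) *s (cubic_matrix d (-b) (-c) a *v v)) = v"
  using assms by (simp add: vector_scalar_commute cubic_matrix_adjugate)

lemma invertible_cubic_matrix:
  assumes "a*d - b*c \<noteq> 0"
  shows "invertible (cubic_matrix a b c d)"
  unfolding invertible_right_inverse matrix_right_invertible_surjective
  by (rule surjI, rule cubic_matrix_right_inverse[OF assms])

lemma cubic_matrix_maps_cone:
  assumes det: "a*d - b*c \<noteq> 0" and v: "v \<in> twisted_cubic_cone"
  shows "cubic_matrix a b c d *v v \<in> twisted_cubic_cone"
proof -
  obtain k u w where k: "k \<noteq> 0" and uw: "u \<noteq> 0 \<or> w \<noteq> 0" and v: "v = k *s cubic_point u w"
    using v unfolding twisted_cubic_cone_eq by blast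
  have "a*u + b*w \<noteq> 0 \<or> c*u + d*w \<noteq> 0"
  proof -
    have "(a*d - b*c) * u = d * (a*u + b*w) - b * (c*u + d*w)"
      and "(a*d - b*c) * w = a * (c*u + d*w) - c * (a*u + b*w)"
      by (simp_all add: algebra_simps)
    then show ?thesis
      using det uw by auto
  qed
  then show ?thesis
    using k unfolding twisted_cubic_cone_eq v vector_scalar_commute cubic_matrix_mult_cubic_point
    by blast
qed

lemma cubic_matrix_in_Gq_matrices:
  assumes det: "a*d - b*c \<noteq> 0"
  shows "cubic_matrix a b c d \<in> Gq_matrices"
proof -
  have "v \<in> (\<lambda>x. cubic_matrix a b c d *v x) ` twisted_cubic_cone" if "v \<in> twisted_cubic_cone" for v
  proof
    show "v = cubic_matrix a b c d *v ((1 / (a*d - b*c)^3) *s (cubic_matrix d (-b) (-c) a *v v))"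
      using cubic_matrix_right_inverse[OF det] by simp
    have "d*a - (-b)*(-c) \<noteq> 0"
      using det by (simp add: mult.commute)
    then show "(1 / (a*d - b*c)^3) *s (cubic_matrix d (-b) (-c) a *v v) \<in> twisted_cubic_cone"
      using det that by (simp add: twisted_cubic_cone_scale cubic_matrix_maps_cone)
  qed
  then show ?thesis
    unfolding Gq_matrices_def
    using invertible_cubic_matrix[OF det] cubic_matrix_maps_cone[OF det] by blast
qed

definition independent_pair :: "'a::field^'n \<Rightarrow> 'a^'n \<Rightarrow> bool" where
  "independent_pair u w \<longleftrightarrow> (\<forall>\<alpha> \<beta>. \<alpha> *s u + \<beta> *s w = 0 \<longrightarrow> \<alpha> = 0 \<and> \<beta> = 0)"

lemma image_proj_line:
  "(\<lambda>x. A *v x) ` proj_line u w = proj_line (A *v u) (A *v w)"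
proof -
  have "proj_line (A *v u) (A *v w) = {A *v (a *s u + b *s w) | a b. True}"
    unfolding proj_line_def by (simp add: matrix_vector_right_distrib vector_scalar_commute)
  then show ?thesis
    unfolding proj_line_def by blast
qed

lemma independent_pair_image:
  assumes "invertible A" and "independent_pair u w"
  shows "independent_pair (A *v u) (A *v w)"
  unfolding independent_pair_def
proof (intro allI impI)
  fix \<alpha> \<beta>
  assume "\<alpha> *s (A *v u) + \<beta> *s (A *v w) = 0"
  then have "A *v (\<alpha> *s u + \<beta> *s w) = 0"
    by (simp add: matrix_vector_right_distrib vector_scalar_commute)
  moreover obtain B where "B ** A = mat 1"
    using assms(1) unfolding invertible_def by blast
  ultimately have "\<alpha> *s u + \<beta> *s w = 0"
    by (metis matrix_vector_mul_assoc matrix_vector_mul_lid matrix_vector_mult_0_right)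
  then show "\<alpha> = 0 \<and> \<beta> = 0"
    using assms(2) unfolding independent_pair_def by blast
qed

lemma proj_line_subset:
  assumes "u \<in> proj_line u' w'" and "w \<in> proj_line u' w'"
  shows "proj_line u w \<subseteq> proj_line u' w'"
proof
  fix v
  assume "v \<in> proj_line u w"
  then obtain a b where v: "v = a *s u + b *s w"
    unfolding proj_line_def by blast
  obtain \<alpha> \<beta> \<gamma> \<delta> where "u = \<alpha> *s u' + \<beta> *s w'" and "w = \<gamma> *s u' + \<delta> *s w'"
    using assms unfolding proj_line_def by blast
  then have "v = (a*\<alpha> + b*\<gamma>) *s u' + (a*\<beta> + b*\<delta>) *s w'"
    by (simp add: v vec_eq_iff algebra_simps)
  then show "v \<in> proj_line u' w'"
    unfolding proj_line_def by blast
qed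

lemma proj_line_eq_if_mem:
  assumes indep: "independent_pair u w"
    and "u \<in> proj_line u' w'" and "w \<in> proj_line u' w'"
  shows "proj_line u w = proj_line u' w'"
proof
  obtain \<alpha> \<beta> \<gamma> \<delta> where u: "u = \<alpha> *s u' + \<beta> *s w'" and w: "w = \<gamma> *s u' + \<delta> *s w'"
    using assms(2,3) unfolding proj_line_def by blast
  define \<Delta> where "\<Delta> = \<alpha>*\<delta> - \<beta>*\<gamma>"
  have u': "\<delta> *s u - \<beta> *s w = \<Delta> *s u'" and w': "\<alpha> *s w - \<gamma> *s u = \<Delta> *s w'"
    by (simp_all add: u w \<Delta>_def vec_eq_iff algebra_simps)
  have "\<Delta> \<noteq> 0"
  proof
    assume "\<Delta> = 0"
    then have "\<delta> *s u + (-\<beta>) *s w = 0" and "(-\<gamma>) *s u + \<alpha> *s w = 0"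
      using u' w' by (simp_all add: vec_eq_iff algebra_simps)
    then have "\<alpha> = 0 \<and> \<beta> = 0 \<and> \<gamma> = 0 \<and> \<delta> = 0"
      using indep unfolding independent_pair_def by fastforce
    then have "1 *s u + 0 *s w = 0"
      by (simp add: u)
    then show False
      using indep unfolding independent_pair_def by (metis zero_neq_one)
  qed
  then have "u' = (\<delta> / \<Delta>) *s u + (- \<beta> / \<Delta>) *s w" and "w' = (- \<gamma> / \<Delta>) *s u + (\<alpha> / \<Delta>) *s w"
    using arg_cong[OF u', of "(*s) (1 / \<Delta>)"] arg_cong[OF w', of "(*s) (1 / \<Delta>)"]
    by (simp_all add: vec_eq_iff field_simps)
  then have "u' \<in> proj_line u w" and "w' \<in> proj_line u w"
    unfolding proj_line_def by blast+
  then show "proj_line u' w' \<subseteq> proj_line u w"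
    by (rule proj_line_subset)
qed (rule proj_line_subset[OF assms(2,3)])

lemma vec4_mem_ell_line:
  "x0 = x2 \<Longrightarrow> x1 = \<mu> * x3 \<Longrightarrow> vec4 x0 x1 x2 x3 \<in> proj_line (vec4 0 \<mu> 0 1) (vec4 1 0 1 0)"
  unfolding proj_line_def by (rule CollectI, intro exI[of _ x3] exI[of _ x0]) simp

lemma of_nat_neq_0_if_mod_eq_1:
  assumes "of_nat n = (0::'a::semiring_1)" and "n mod m = 1"
  shows "of_nat m \<noteq> (0::'a)"
proof
  assume "of_nat m = (0::'a)"
  then have "of_nat n = (1::'a)"
    using assms(2) by (metis mult_div_mod_eq of_nat_add of_nat_mult mult_zero_left add_0 of_nat_1)
  then show False
    using assms(1) by simp
qed

text \<open>Translation by \<open>1\<close> permutes the ring, so it does not change the sum of all elements.\<close>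
lemma of_nat_card_eq_0: "of_nat CARD('a) = (0::'a::{ring_1,finite})"
proof -
  have "bij ((+) (1::'a))"
    by (rule bij_betw_byWitness[where f' = "\<lambda>a. a - 1"]) auto
  then have "(\<Sum>a\<in>UNIV. 1 + a) = (\<Sum>a\<in>UNIV. a::'a)"
    by (rule sum.reindex_bij_betw[unfolded comp_def])
  then show ?thesis
    by (simp add: sum.distrib)
qed

lemma finite_field_power_card_minus_1:
  fixes x :: "'a::{field,finite}"
  assumes "x \<noteq> 0"
  shows "x ^ (CARD('a) - 1) = 1"
proof -
  let ?S = "UNIV - {0::'a}"
  have inj: "inj_on (\<lambda>a. x*a) ?S"
    using assms by (auto intro: inj_onI)
  have "(\<lambda>a. x*a) ` ?S = ?S"
  proof
    show "?S \<subseteq> (\<lambda>a. x*a) ` ?S"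
      using assms by (auto intro!: image_eqI[where x = "_ / x"])
  qed (use assms in auto)
  then have "\<Prod>?S = (\<Prod>a\<in>?S. x*a)"
    using prod.reindex[OF inj, of id] by simp
  also have "\<dots> = x ^ card ?S * \<Prod>?S"
    by (simp add: prod.distrib)
  finally have "x ^ card ?S = 1"
    by (simp add: prod_zero_iff)
  then show ?thesis
    by (simp add: card_Diff_singleton)
qed

text \<open>Half of the nonzero elements are not roots of \<open>X^((q-1)/2) - 1\<close>, so they satisfy
  \<open>x^((q-1)/2) = -1\<close>, and \<open>(q-1)/2\<close> is even.\<close>
lemma finite_field_sqrt_minus_1:
  assumes "CARD('a) mod 4 = 1"
  obtains i :: "'a::{field,finite}" where "i^2 = -1"
proof -
  define m where "m = (CARD('a) - 1) div 2"
  have "card {0::'a, 1} \<le> CARD('a)"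
    by (rule card_mono) auto
  then have m: "CARD('a) - 1 = 2*m" "m > 0" "even m"
    using assms unfolding m_def by simp_all presburger+
  define p :: "'a poly" where "p = monom 1 m - 1"
  have "coeff p m = 1"
    using m(2) by (simp add: p_def coeff_monom)
  moreover have "degree p \<le> m"
    unfolding p_def by (metis degree_diff_le degree_monom_le degree_1 zero_le)
  moreover have "{x. poly p x = 0} = {x. x^m = 1}"
    by (simp add: p_def poly_monom)
  ultimately have "card {x::'a. x^m = 1} \<le> m"
    using card_poly_roots_bound[of p] by force
  moreover have "card (UNIV - {0::'a}) = 2*m"
    using m(1) by (simp add: card_Diff_singleton)
  ultimately have "\<not> UNIV - {0} \<subseteq> {x::'a. x^m = 1}"
    using card_mono[of "{x::'a. x^m = 1}" "UNIV - {0}"] m(2) by auto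
  then obtain x :: 'a where "x \<noteq> 0" "x^m \<noteq> 1"
    by blast
  moreover have "(x^m - 1) * (x^m + 1) = 0" if "x \<noteq> 0"
  proof -
    have "(x^m)^2 = 1"
      using finite_field_power_card_minus_1[OF that] m(1) by (simp flip: power_mult add: mult.commute)
    then show ?thesis
      by (simp add: algebra_simps power2_eq_square)
  qed
  ultimately have "x^m = -1"
    by (simp add: eq_neg_iff_add_eq_0)
  moreover obtain n where "m = 2*n"
    using m(3) by blast
  ultimately have "(x^n)^2 = -1"
    by (simp add: power_mult[symmetric] mult.commute)
  then show ?thesis
    using that by blast
qed

text \<open>With \<open>s = \<surd>3\<close> and \<open>w = \<surd>(2\<surd>3)\<close>, the root is \<open>R = (s - 1) / w\<close>, i.e. \<open>R^2 = 2/\<surd>3 - 1\<close>.\<close>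
lemma quartic_witness_exists:
  fixes i y :: "'a::field"
  assumes i: "i^2 = -1" and y: "y^4 = -1/3" and two: "(2::'a) \<noteq> 0" and three: "(3::'a) \<noteq> 0"
  obtains R :: 'a where "3*R^4 + 6*R^2 - 1 = 0"
proof -
  define s where "s = -3*i*y^2"
  define w where "w = 3*y^3*(1+i)"
  have y': "3*y^4 = -1"
    using y three by (simp add: field_simps)
  have s: "s^2 = 3"
    using i y' unfolding s_def by algebra
  have w: "w^2 = 2 * s"
    using i y' unfolding s_def w_def by algebra
  have "s \<noteq> 0" "w \<noteq> 0"
    using s w two three by auto
  define R where "R = (s - 1) / w"
  have "(s - 1)^2 = 2 * (2 - s)"
    using s by (simp add: power2_eq_square algebra_simps)
  then have R: "R^2 = (2 - s) / s"
    using \<open>s \<noteq> 0\<close> two unfolding R_def power_divide w by (simp add: field_simps)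
  have "3*R^4 + 6*R^2 - 1 = 3*(R^2)^2 + 6*R^2 - 1"
    by (simp flip: power_mult)
  also have "\<dots> = (12 - 4 * s^2) / s^2"
    using \<open>s \<noteq> 0\<close> unfolding R by (simp add: field_simps power2_eq_square)
  also have "\<dots> = 0"
    by (simp add: s)
  finally show ?thesis
    using that by blast
qed

lemma cubic_matrix_image_Lc:
  assumes det: "a*d - b*c \<noteq> 0"
    and "a^3 + b^3 = a*c^2 + b*d^2" and "a^2*c + b^2*d = \<mu> * (c^3 + d^3)"
    and "3*a*b^2 = a*d^2 + 2*b*c*d" and "2*a*b*d + b^2*c = \<mu> * (3*c*d^2)"
  shows "(\<lambda>v. cubic_matrix a b c d *v v) ` proj_line (vec4 1 0 0 1) (vec4 0 0 1 0)
           = proj_line (vec4 0 \<mu> 0 1) (vec4 1 0 1 0)"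
proof -
  let ?A = "cubic_matrix a b c d"
  have "independent_pair (?A *v vec4 1 0 0 1) (?A *v vec4 0 0 1 0)"
    using invertible_cubic_matrix[OF det]
    by (rule independent_pair_image) (simp add: independent_pair_def zero_eq_vec4)
  moreover have "?A *v vec4 1 0 0 1 \<in> proj_line (vec4 0 \<mu> 0 1) (vec4 1 0 1 0)"
    and "?A *v vec4 0 0 1 0 \<in> proj_line (vec4 0 \<mu> 0 1) (vec4 1 0 1 0)"
    using assms(2-) by (auto simp: cubic_matrix_mult_vec4 intro!: vec4_mem_ell_line)
  ultimately show ?thesis
    unfolding image_proj_line by (rule proj_line_eq_if_mem)
qed

lemma same_Gq_orbit_Lc_ell:
  fixes R x :: "'a::field"
  assumes R: "3*R^4 + 6*R^2 - 1 = 0" and x: "2*x^3 + 1 = 0"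
    and two: "(2::'a) \<noteq> 0" and three: "(3::'a) \<noteq> 0"
  shows "same_Gq_orbit (proj_line (vec4 1 0 0 (1::'a)) (vec4 0 0 1 0))
                       (proj_line (vec4 0 (-1/3) 0 (1::'a)) (vec4 1 0 1 0))"
proof -
  define a b c d where "a = 2*R*x*(1+R^2)" and "b = R*(R^2-1)" and "c = -4*R^2*x" and "d = R^2-1"
  note abcd = a_def b_def c_def d_def
  have "(9::'a) = 3 * 3"
    by simp
  then have "(9::'a) \<noteq> 0"
    using three by (metis no_zero_divisors)
  moreover have "9 * (a^3 + b^3) = 9 * (a*c^2 + b*d^2)"
    using R x unfolding abcd by algebra
  ultimately have F1: "a^3 + b^3 = a*c^2 + b*d^2"
    by (metis mult_left_cancel)
  have "3 * (3*(a^2*c + b^2*d)) = 3 * (-(c^3 + d^3))"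
    using R x unfolding abcd by algebra
  then have "3*(a^2*c + b^2*d) = -(c^3 + d^3)"
    using three by (metis mult_left_cancel)
  then have F2: "a^2*c + b^2*d = -1/3 * (c^3 + d^3)"
    using three by (simp add: field_simps)
  have F3: "3*a*b^2 = a*d^2 + 2*b*c*d"
    using R unfolding abcd by algebra
  have "2*a*b*d + b^2*c = -(c*d^2)"
    unfolding abcd by algebra
  then have F4: "2*a*b*d + b^2*c = -1/3 * (3*c*d^2)"
    using three by simp
  have "a*d - b*c = -16*R^3*x"
    using R unfolding abcd by algebra
  moreover have "R \<noteq> 0" "x \<noteq> 0" "(16::'a) \<noteq> 0"
    using R x two power_not_zero[of "2::'a" 4] by auto
  ultimately have det: "a*d - b*c \<noteq> 0"
    by simp
  show ?thesis
    unfolding same_Gq_orbit_def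
    using cubic_matrix_in_Gq_matrices[OF det] cubic_matrix_image_Lc[OF det F1 F2 F3 F4] by blast
qed

theorem lemma7p5:
  fixes q :: nat
  assumes "CARD('a::{field,finite}) = q"
    and "q mod 12 = 1"
    and "\<exists>x::'a. x ^ 3 = - 1 / 2"
    and "\<exists>y::'a. y ^ 4 = - 1 / 3"
  shows "(\<exists>z::'a. z ^ 2 = - 1 / 3) \<and>
         same_Gq_orbit (proj_line (vec4 1 0 0 (1::'a)) (vec4 0 0 1 0))
                       (proj_line (vec4 0 (- 1 / 3) 0 (1::'a)) (vec4 1 0 1 0))"
proof -
  have "q mod 2 = 1" "q mod 3 = 1" "CARD('a) mod 4 = 1"
    using assms(1,2) by presburger+
  then have two: "(2::'a) \<noteq> 0" and three: "(3::'a) \<noteq> 0"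
    using of_nat_neq_0_if_mod_eq_1[of q] of_nat_card_eq_0 assms(1) by (metis of_nat_numeral)+
  obtain i :: 'a where "i^2 = -1"
    using finite_field_sqrt_minus_1 \<open>CARD('a) mod 4 = 1\<close> by blast
  obtain x :: 'a where x: "x^3 = -1/2"
    using assms(3) by blast
  obtain y :: 'a where y: "y^4 = -1/3"
    using assms(4) by blast
  obtain R :: 'a where "3*R^4 + 6*R^2 - 1 = 0"
    using quartic_witness_exists[OF \<open>i^2 = -1\<close> y two three] by blast
  moreover have "2*x^3 + 1 = 0"
    using x two by (simp add: field_simps)
  moreover have "(y^2)^2 = -1/3"
    using y by (simp flip: power_mult)
  ultimately show ?thesis
    using same_Gq_orbit_Lc_ell two three by blast
qed

end
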